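(* Let $Q\in\mathbb{R}^{d\times N}$ be the matrix whose columns are unit vectors $q_1,\dots,q_N\in\mathcal S^{d-1}$, and fix $v\in\mathcal S^{d-1}$. Define \[\mathcal C_{\mathrm{eig}}=\{x\in\mathbb{R}^N: x\ge0,\ Q\,\mathrm{diag}(Q^\top v)\,x=v\},\qquad \mathcal C_{\mathrm{dom}}=\{x\in\mathcal C_{\mathrm{eig}}: I-Q\,\mathrm{diag}(x)\,Q^\top\succeq0\}.\] For any $x\in\mathcal C_{\mathrm{eig}}$, the probability weights $\alpha_i=x_i/(\mathbf 1^\top x)$ make $v$ an eigenvector of $\Sigma=\sum_{i=1}^N\alpha_iq_iq_i^\top$ with eigenvalue $(\mathbf 1^\top x)^{-1}$. If in addition $x\in\mathcal C_{\mathrm{dom}}$, then $v$ is a dominant eigenvector of $\Sigma$, i.e. $(\mathbf 1^\top x)^{-1}$ is the largest eigenvalue of $\Sigma$. Furthermore, $\mathcal C_{\mathrm{eig}}$ characterizes all such weightings: for every probability vector $\alpha\in\mathbb{R}^N_+$ for which $v$ is an eigenvector of $\sum_i\alpha_iq_iq_i^\top$ with nonzero eigenvalue $\lambda$, one has $\alpha/\lambda\in\mathcal C_{\mathrm{eig}}$ and $\alpha=x/(\mathbf 1^\top x)$ for $x=\alpha/\lambda$.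
   Context: $\mathcal S^{d-1}$ is the unit sphere in $\mathbb{R}^d$, $\mathbf 1$ is the all-ones vector, $\mathrm{diag}(u)$ is the diagonal matrix with diagonal $u$, inequalities $x\ge0$ are entrywise, and $A\succeq0$ means $A$ is positive semidefinite. *)

theory Defs
  imports "HOL-Analysis.Analysis"
begin

definition diag_mat :: "real^'n \<Rightarrow> real^'n^'n" where
  "diag_mat u = (\<chi> i j. if i = j then u $ i else 0)"

definition outer :: "real^'m \<Rightarrow> real^'n \<Rightarrow> real^'n^'m" where
  "outer u w = (\<chi> j k. u $ j * w $ k)"

definition psd :: "real^'n^'n \<Rightarrow> bool" where
  "psd A \<longleftrightarrow> transpose A = A \<and> (\<forall>y. 0 \<le> y \<bullet> (A *v y))"

definition is_eigenvector :: "real^'n^'n \<Rightarrow> real^'n \<Rightarrow> real \<Rightarrow> bool" where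
  "is_eigenvector A w \<mu> \<longleftrightarrow> w \<noteq> 0 \<and> A *v w = \<mu> *\<^sub>R w"

definition is_eigenvalue :: "real^'n^'n \<Rightarrow> real \<Rightarrow> bool" where
  "is_eigenvalue A \<mu> \<longleftrightarrow> (\<exists>w. is_eigenvector A w \<mu>)"

definition Sigma :: "real^'n^'d \<Rightarrow> real^'n \<Rightarrow> real^'d^'d" where
  "Sigma Q \<alpha> = (\<Sum>i\<in>UNIV. \<alpha> $ i *\<^sub>R outer (column i Q) (column i Q))"

definition C_eig :: "real^'n^'d \<Rightarrow> real^'d \<Rightarrow> (real^'n) set" where
  "C_eig Q v = {x. (\<forall>i. 0 \<le> x $ i) \<and> (Q ** diag_mat (transpose Q *v v)) *v x = v}"

definition C_dom :: "real^'n^'d \<Rightarrow> real^'d \<Rightarrow> (real^'n) set" where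
  "C_dom Q v = {x \<in> C_eig Q v. psd (mat 1 - Q ** diag_mat x ** transpose Q)}"

end

theory Submission
  imports Defs
begin

text \<open>Both matrices in the definitions of \<open>C_eig\<close> and \<open>C_dom\<close> are expressions of
  \<open>Sigma Q x = \<Sum>i. x\<^sub>i q\<^sub>i q\<^sub>i\<^sup>T\<close>: \<open>Q diag(Q\<^sup>Tv) x = Sigma Q x v\<close> and
  \<open>Q diag(x) Q\<^sup>T = Sigma Q x\<close>. So \<open>x \<in> C_eig\<close> says \<open>Sigma Q x v = v\<close>, and since \<open>Sigma Q\<close> is
  linear in the weights, normalising \<open>x\<close> by \<open>1\<^sup>Tx > 0\<close> turns this into the eigenvalue
  \<open>(1\<^sup>Tx)\<^sup>-\<^sup>1\<close>; \<open>I - Sigma Q x \<succeq> 0\<close> bounds every eigenvalue of \<open>Sigma Q x\<close> by 1.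
  Conversely, nonnegative weights make \<open>Sigma Q \<alpha>\<close> positive semidefinite, so a nonzero
  eigenvalue \<open>\<lambda>\<close> is positive and \<open>\<alpha>/\<lambda>\<close> satisfies \<open>Sigma Q (\<alpha>/\<lambda>) v = v\<close>.\<close>

lemma Sigma_mult_vec:
  "Sigma Q a *v w = (\<Sum>i\<in>UNIV. (a $ i * (column i Q \<bullet> w)) *\<^sub>R column i Q)"
  apply (simp add: vec_eq_iff Sigma_def matrix_vector_mult_def outer_def sum_component
      column_def inner_vec_def sum_distrib_left sum_distrib_right)
  apply (subst sum.swap)
  apply (simp add: algebra_simps)
  done

lemma matrix_diag_transpose_mult_vec_eq_Sigma:
  "(Q ** diag_mat (transpose Q *v v)) *v x = Sigma Q x *v v"
  unfolding Sigma_mult_vec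
  apply (simp add: vec_eq_iff matrix_matrix_mult_def diag_mat_def matrix_vector_mult_def
      transpose_def sum_component column_def inner_vec_def if_distrib sum_distrib_left
      sum_distrib_right cong: if_cong)
  apply (simp add: algebra_simps)
  done

lemma matrix_diag_transpose_eq_Sigma: "Q ** diag_mat x ** transpose Q = Sigma Q x"
  apply (simp add: vec_eq_iff matrix_matrix_mult_def diag_mat_def transpose_def Sigma_def
      outer_def sum_component column_def if_distrib sum_distrib_left sum_distrib_right
      cong: if_cong)
  apply (simp add: algebra_simps)
  done

lemma Sigma_scaleR: "Sigma Q (c *\<^sub>R a) = c *\<^sub>R Sigma Q a"
  by (simp add: Sigma_def scaleR_sum_right)

lemma Sigma_zero [simp]: "Sigma Q 0 = 0"
  using Sigma_scaleR [of Q 0] by simp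

lemma inner_Sigma_mult_vec:
  "w \<bullet> (Sigma Q a *v w) = (\<Sum>i\<in>UNIV. a $ i * (column i Q \<bullet> w)\<^sup>2)"
  by (simp add: Sigma_mult_vec inner_sum_right power2_eq_square inner_commute mult.assoc)

lemma Sigma_quadratic_form_nonneg:
  assumes "\<forall>i. 0 \<le> a $ i"
  shows "0 \<le> w \<bullet> (Sigma Q a *v w)"
  unfolding inner_Sigma_mult_vec using assms by (simp add: sum_nonneg)

lemma mem_C_eig_iff: "x \<in> C_eig Q v \<longleftrightarrow> (\<forall>i. 0 \<le> x $ i) \<and> Sigma Q x *v v = v"
  unfolding C_eig_def matrix_diag_transpose_mult_vec_eq_Sigma by simp

lemma mem_C_dom_iff: "x \<in> C_dom Q v \<longleftrightarrow> x \<in> C_eig Q v \<and> psd (mat 1 - Sigma Q x)"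
  by (simp add: C_dom_def matrix_diag_transpose_eq_Sigma)

lemma C_eig_sum_pos:
  assumes "v \<noteq> 0" and "x \<in> C_eig Q v"
  shows "0 < (\<Sum>i\<in>UNIV. x $ i)"
proof -
  have nonneg: "\<forall>i. 0 \<le> x $ i" and fixed: "Sigma Q x *v v = v"
    using assms(2) by (auto simp: mem_C_eig_iff)
  have "x \<noteq> 0"
    using fixed assms(1) by auto
  then have "(\<Sum>i\<in>UNIV. x $ i) \<noteq> 0"
    using nonneg by (auto simp: sum_nonneg_eq_0_iff vec_eq_iff)
  moreover have "0 \<le> (\<Sum>i\<in>UNIV. x $ i)"
    using nonneg by (simp add: sum_nonneg)
  ultimately show ?thesis by simp
qed

lemma is_eigenvector_scaleR:
  "is_eigenvector A w \<mu> \<Longrightarrow> is_eigenvector (c *\<^sub>R A) w (c * \<mu>)"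
  by (simp add: is_eigenvector_def scaleR_matrix_vector_assoc [symmetric])

lemma is_eigenvalue_scaleR:
  "is_eigenvalue A \<mu> \<Longrightarrow> is_eigenvalue (c *\<^sub>R A) (c * \<mu>)"
  unfolding is_eigenvalue_def using is_eigenvector_scaleR by blast

lemma eigenvalue_le_one_if_psd_diff:
  assumes "psd (mat 1 - A)" and "is_eigenvalue A \<mu>"
  shows "\<mu> \<le> 1"
proof -
  obtain w where "w \<noteq> 0" and eig: "A *v w = \<mu> *\<^sub>R w"
    using assms(2) by (auto simp: is_eigenvalue_def is_eigenvector_def)
  have "0 \<le> w \<bullet> ((mat 1 - A) *v w)"
    using assms(1) by (simp add: psd_def)
  also have "\<dots> = (1 - \<mu>) * (w \<bullet> w)"
    using eig by (simp add: matrix_vector_mult_diff_rdistrib inner_diff_right algebra_simps)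
  finally have "0 \<le> (1 - \<mu>) * (w \<bullet> w)" .
  moreover have "0 < w \<bullet> w"
    using \<open>w \<noteq> 0\<close> by simp
  ultimately show ?thesis
    by (simp add: zero_le_mult_iff)
qed

lemma Sigma_eigenvalue_nonneg:
  assumes "\<forall>i. 0 \<le> a $ i" and "is_eigenvector (Sigma Q a) w \<mu>"
  shows "0 \<le> \<mu>"
proof -
  have "w \<noteq> 0" and eig: "Sigma Q a *v w = \<mu> *\<^sub>R w"
    using assms(2) by (auto simp: is_eigenvector_def)
  have "0 \<le> w \<bullet> (Sigma Q a *v w)"
    using assms(1) by (rule Sigma_quadratic_form_nonneg)
  also have "\<dots> = \<mu> * (w \<bullet> w)"
    using eig by simp
  finally have "0 \<le> \<mu> * (w \<bullet> w)" .
  moreover have "0 < w \<bullet> w"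
    using \<open>w \<noteq> 0\<close> by simp
  ultimately show ?thesis
    by (simp add: zero_le_mult_iff)
qed

lemma C_eig_normalized_is_eigenvector:
  assumes "v \<noteq> 0" and "x \<in> C_eig Q v"
  defines "s \<equiv> \<Sum>i\<in>UNIV. x $ i"
  shows "(\<forall>i. 0 \<le> (x /\<^sub>R s) $ i) \<and> (\<Sum>i\<in>UNIV. (x /\<^sub>R s) $ i) = 1
    \<and> is_eigenvector (Sigma Q (x /\<^sub>R s)) v (inverse s)"
proof -
  have "0 < s"
    unfolding s_def using assms(1,2) by (rule C_eig_sum_pos)
  moreover have "is_eigenvector (Sigma Q x) v 1"
    using assms(1,2) by (simp add: is_eigenvector_def mem_C_eig_iff)
  ultimately show ?thesis
    using assms(2) is_eigenvector_scaleR [of "Sigma Q x" v 1 "inverse s"]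
    by (auto simp: mem_C_eig_iff Sigma_scaleR s_def simp flip: sum_distrib_left)
qed

lemma C_dom_normalized_eigenvalue_le:
  assumes "v \<noteq> 0" and "x \<in> C_dom Q v"
    and "is_eigenvalue (Sigma Q (x /\<^sub>R (\<Sum>i\<in>UNIV. x $ i))) \<mu>"
  shows "\<mu> \<le> inverse (\<Sum>i\<in>UNIV. x $ i)"
proof -
  let ?s = "\<Sum>i\<in>UNIV. x $ i"
  have "0 < ?s"
    using assms(1,2) C_eig_sum_pos by (auto simp: mem_C_dom_iff)
  then have "is_eigenvalue (Sigma Q x) (?s * \<mu>)"
    using is_eigenvalue_scaleR [OF assms(3), of ?s] by (simp add: Sigma_scaleR)
  then have "?s * \<mu> \<le> 1"
    using assms(2) eigenvalue_le_one_if_psd_diff by (auto simp: mem_C_dom_iff)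
  with \<open>0 < ?s\<close> show ?thesis
    by (simp add: field_simps)
qed

lemma eigen_weights_scaled_mem_C_eig:
  assumes nonneg: "\<forall>i. 0 \<le> \<alpha> $ i" and "(\<Sum>i\<in>UNIV. \<alpha> $ i) = 1"
    and "lam \<noteq> 0" and eig: "is_eigenvector (Sigma Q \<alpha>) v lam"
  shows "\<alpha> /\<^sub>R lam \<in> C_eig Q v \<and> \<alpha> = (\<alpha> /\<^sub>R lam) /\<^sub>R (\<Sum>i\<in>UNIV. (\<alpha> /\<^sub>R lam) $ i)"
proof -
  have "0 < lam"
    using Sigma_eigenvalue_nonneg [OF nonneg eig] \<open>lam \<noteq> 0\<close> by simp
  moreover have "is_eigenvector (Sigma Q (\<alpha> /\<^sub>R lam)) v 1"
    using is_eigenvector_scaleR [OF eig, of "inverse lam"] \<open>lam \<noteq> 0\<close>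
    by (simp add: Sigma_scaleR)
  ultimately show ?thesis
    using nonneg \<open>(\<Sum>i\<in>UNIV. \<alpha> $ i) = 1\<close>
    by (simp add: mem_C_eig_iff is_eigenvector_def flip: sum_distrib_left)
qed

theorem proposition5:
  fixes Q :: "real^'n^'d" and v :: "real^'d"
  assumes unit_cols: "\<forall>i. norm (column i Q) = 1"
    and unit_v: "norm v = 1"
  shows "(\<forall>x \<in> C_eig Q v.
            (\<forall>i. 0 \<le> (x /\<^sub>R (\<Sum>i\<in>UNIV. x $ i)) $ i)
          \<and> (\<Sum>i\<in>UNIV. (x /\<^sub>R (\<Sum>i\<in>UNIV. x $ i)) $ i) = 1
          \<and> is_eigenvector (Sigma Q (x /\<^sub>R (\<Sum>i\<in>UNIV. x $ i))) v (inverse (\<Sum>i\<in>UNIV. x $ i)))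
       \<and> (\<forall>x \<in> C_dom Q v.
            (\<forall>\<mu>. is_eigenvalue (Sigma Q (x /\<^sub>R (\<Sum>i\<in>UNIV. x $ i))) \<mu>
                  \<longrightarrow> \<mu> \<le> inverse (\<Sum>i\<in>UNIV. x $ i)))
       \<and> (\<forall>\<alpha> lam. (\<forall>i. 0 \<le> \<alpha> $ i) \<and> (\<Sum>i\<in>UNIV. \<alpha> $ i) = 1 \<and> lam \<noteq> 0
              \<and> is_eigenvector (Sigma Q \<alpha>) v lam
            \<longrightarrow> \<alpha> /\<^sub>R lam \<in> C_eig Q v
              \<and> \<alpha> = (\<alpha> /\<^sub>R lam) /\<^sub>R (\<Sum>i\<in>UNIV. (\<alpha> /\<^sub>R lam) $ i))"
proof -
  have "v \<noteq> 0"
    using unit_v by auto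
  then show ?thesis
    using C_eig_normalized_is_eigenvector C_dom_normalized_eigenvalue_le
      eigen_weights_scaled_mem_C_eig
    by blast
qed

end
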